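(* Let $T_1(z),\dots,T_M(z)$ be holomorphic functions in a neighborhood of $0\in\mathbf C$, not all identically zero, and let $q_1,\dots,q_M$ be real numbers. Then there exist a neighborhood $\mathcal O$ of $0$ and a constant $C$ such that $$\Big|\partial_z\partial_{\bar z}\ln\Big(\sum_{l=1}^M\epsilon^{2q_l}|T_l(z)|^2\Big)\Big|\le\frac{C}{|z|^2}$$ for all $z\in\mathcal O\setminus\{0\}$ and all $\epsilon>0$. *)

theory Defs
  imports "HOL-Analysis.Analysis"
begin

definition dx :: "(complex \<Rightarrow> real) \<Rightarrow> complex \<Rightarrow> real" where
  "dx f z = deriv (\<lambda>t. f (z + of_real t)) 0"

definition dy :: "(complex \<Rightarrow> real) \<Rightarrow> complex \<Rightarrow> real" where
  "dy f z = deriv (\<lambda>t. f (z + \<i> * of_real t)) 0"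

text \<open>The operator \<open>\<partial>_z \<partial>_{\<bar>z\<bar>} = (1/4)(\<partial>_x\<^sup>2 + \<partial>_y\<^sup>2)\<close> on real-valued functions.\<close>
definition ddbar :: "(complex \<Rightarrow> real) \<Rightarrow> complex \<Rightarrow> real" where
  "ddbar f z = (dx (dx f) z + dy (dy f) z) / 4"

end

theory Submission
  imports Defs "HOL-Complex_Analysis.Complex_Analysis"
begin

text \<open>Write \<open>a l = \<epsilon> powr (2 * q l)\<close> and \<open>F = (\<Sum>l. a l * \<bar>T l\<bar>\<^sup>2)\<close>. Then
  \<open>\<partial>\<^sub>zF = (\<Sum>l. a l * cnj (T l) * T' l)\<close> and \<open>ddbar F = (\<Sum>l. a l * \<bar>T' l\<bar>\<^sup>2)\<close>,
  so \<open>ddbar (ln F) = ddbar F / F - \<bar>\<partial>\<^sub>zF\<bar>\<^sup>2 / F\<^sup>2\<close>, and both terms lie in \<open>[0, X\<^sup>2]\<close> as soon as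
  \<open>\<bar>T' l\<bar> \<le> X * \<bar>T l\<bar>\<close> for all \<open>l\<close>, whatever the weights \<open>a l \<ge> 0\<close> are. Near \<open>0\<close> each \<open>T l\<close>
  either vanishes identically or equals \<open>z ^ n * g z\<close> with \<open>g 0 \<noteq> 0\<close>, hence
  \<open>\<bar>z * T' l z\<bar> \<le> K * \<bar>T l z\<bar>\<close> on a punctured disc, and \<open>X = K / \<bar>z\<bar>\<close> gives the bound,
  uniformly in \<open>\<epsilon>\<close>.\<close>

lemma deriv_along_line_eq:
  fixes g :: "complex \<Rightarrow> real"
  assumes "(g has_derivative D) (at w)"
  shows "deriv (\<lambda>t. g (w + of_real t * e)) 0 = D e"
proof -
  have "((\<lambda>t::real. w + of_real t * e) has_derivative (\<lambda>s. of_real s * e)) (at 0)"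
    by (auto intro!: derivative_eq_intros)
  from has_derivative_compose[OF this] assms
  have "((\<lambda>t. g (w + of_real t * e)) has_derivative (\<lambda>s. D (of_real s * e))) (at 0)"
    by simp
  moreover have "D (of_real s * e) = s * D e" for s
    using linear_scale[OF has_derivative_linear[OF assms], of s e]
    by (simp add: scaleR_conv_of_real)
  ultimately have "((\<lambda>t. g (w + of_real t * e)) has_real_derivative D e) (at 0)"
    by (simp add: has_field_derivative_def mult_commute_abs)
  then show ?thesis
    by (rule DERIV_imp_deriv)
qed

lemma deriv_along_line_cong:
  fixes g1 g2 :: "complex \<Rightarrow> real"
  assumes "\<forall>\<^sub>F w in nhds z. g1 w = g2 w"
  shows "deriv (\<lambda>t. g1 (z + of_real t * e)) 0 = deriv (\<lambda>t. g2 (z + of_real t * e)) 0"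
proof (rule deriv_cong_ev[OF _ refl])
  have "filterlim (\<lambda>t::real. z + of_real t * e) (nhds z) (nhds 0)"
    by (auto intro!: tendsto_eq_intros filterlim_ident)
  then show "\<forall>\<^sub>F t in nhds 0. g1 (z + of_real t * e) = g2 (z + of_real t * e)"
    by (rule eventually_compose_filterlim[OF assms])
qed

lemma ddbar_eq_second_derivatives:
  fixes g :: "complex \<Rightarrow> real"
  assumes "open V" "z \<in> V"
    and g: "\<And>w. w \<in> V \<Longrightarrow> (g has_derivative Dg w) (at w)"
    and Hx: "((\<lambda>w. Dg w 1) has_derivative Hx) (at z)"
    and Hy: "((\<lambda>w. Dg w \<i>) has_derivative Hy) (at z)"
  shows "ddbar g z = (Hx 1 + Hy \<i>) / 4"
proof -
  have near: "\<forall>\<^sub>F w in nhds z. w \<in> V"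
    using assms(1,2) by (rule eventually_nhds_in_open)
  have "dx (dx g) z = dx (\<lambda>w. Dg w 1) z"
    unfolding dx_def using deriv_along_line_eq[OF g, of _ 1]
    by (intro deriv_along_line_cong[where e = 1, simplified] eventually_mono[OF near]) simp
  also have "\<dots> = Hx 1"
    unfolding dx_def using deriv_along_line_eq[OF Hx, of 1] by simp
  finally have "dx (dx g) z = Hx 1" .
  moreover have "dy (dy g) z = dy (\<lambda>w. Dg w \<i>) z"
    unfolding dy_def using deriv_along_line_eq[OF g, of _ \<i>]
    by (intro deriv_along_line_cong[where e = \<i>, simplified mult.commute] eventually_mono[OF near])
      (simp add: mult.commute)
  moreover have "dy (\<lambda>w. Dg w \<i>) z = Hy \<i>"
    unfolding dy_def using deriv_along_line_eq[OF Hy, of \<i>] by (simp add: mult.commute)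
  ultimately show ?thesis
    by (simp add: ddbar_def)
qed

text \<open>The derivative hypotheses say, in real form, that \<open>S = \<partial>\<^sub>zF\<close> and \<open>P = ddbar F\<close>.\<close>

lemma ddbar_ln:
  fixes F :: "complex \<Rightarrow> real" and S :: "complex \<Rightarrow> complex"
  assumes "open V" "z \<in> V"
    and F_pos: "\<And>w. w \<in> V \<Longrightarrow> F w > 0"
    and F: "\<And>w. w \<in> V \<Longrightarrow> (F has_derivative (\<lambda>h. 2 * Re (S w * h))) (at w)"
    and S: "(S has_derivative (\<lambda>h. of_real P * cnj h + R * h)) (at z)"
  shows "ddbar (\<lambda>w. ln (F w)) z = P / F z - (cmod (S z))\<^sup>2 / (F z)\<^sup>2"
proof -
  define Dg where "Dg w = (\<lambda>h. 2 * Re (S w * h) / F w)" for w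
  have "((\<lambda>w. ln (F w)) has_derivative Dg w) (at w)" if "w \<in> V" for w
    using DERIV_compose_FDERIV[OF DERIV_ln F[OF that]] F_pos[OF that]
    by (simp add: Dg_def divide_inverse)
  moreover have "((\<lambda>w. Dg w e) has_derivative
      (\<lambda>h. 2 * Re ((of_real P * cnj h + R * h) * e) / F z
           - 2 * Re (S z * e) * (2 * Re (S z * h)) / (F z)\<^sup>2)) (at z)" for e
    unfolding Dg_def using F_pos[OF \<open>z \<in> V\<close>]
    by (auto intro!: derivative_eq_intros S F[OF \<open>z \<in> V\<close>] simp: field_simps power2_eq_square)
  ultimately have "ddbar (\<lambda>w. ln (F w)) z =
      (2 * Re ((of_real P + R) * 1) / F z - 2 * Re (S z) * (2 * Re (S z)) / (F z)\<^sup>2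
       + 2 * Re ((of_real P * cnj \<i> + R * \<i>) * \<i>) / F z
       - 2 * Re (S z * \<i>) * (2 * Re (S z * \<i>)) / (F z)\<^sup>2) / 4"
    using assms(1,2) by (subst ddbar_eq_second_derivatives) auto
  also have "\<dots> = P / F z - (cmod (S z))\<^sup>2 / (F z)\<^sup>2"
    using F_pos[OF \<open>z \<in> V\<close>] unfolding cmod_power2 by (simp add: field_simps power2_eq_square)
  finally show ?thesis .
qed

lemma has_derivative_cnj_mult:
  assumes "(f has_field_derivative f') (at w)" "(g has_field_derivative g') (at w)"
  shows "((\<lambda>w. cnj (f w) * g w) has_derivative
           (\<lambda>h. cnj f' * g w * cnj h + cnj (f w) * g' * h)) (at w)"
  using assms unfolding has_field_derivative_def
  by (auto intro!: derivative_eq_intros simp: algebra_simps)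

lemma has_derivative_cmod_sq:
  assumes "(f has_field_derivative f') (at w)"
  shows "((\<lambda>w. (cmod (f w))\<^sup>2) has_derivative (\<lambda>h. 2 * Re (cnj (f w) * f' * h))) (at w)"
proof -
  have "((\<lambda>w. Re (cnj (f w) * f w)) has_derivative
      (\<lambda>h. Re (cnj f' * f w * cnj h + cnj (f w) * f' * h))) (at w)"
    by (rule has_derivative_Re[OF has_derivative_cnj_mult[OF assms assms]])
  moreover have "(\<lambda>w. Re (cnj (f w) * f w)) = (\<lambda>w. (cmod (f w))\<^sup>2)"
    by (simp add: cmod_power2 power2_eq_square[of "Re _"] power2_eq_square[of "Im _"])
  moreover have "(\<lambda>h. Re (cnj f' * f w * cnj h + cnj (f w) * f' * h))
      = (\<lambda>h. 2 * Re (cnj (f w) * f' * h))"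
    by (simp add: fun_eq_iff algebra_simps)
  ultimately show ?thesis
    by simp
qed

lemma ddbar_ln_weighted_sum_cmod_sq:
  fixes T :: "'i \<Rightarrow> complex \<Rightarrow> complex" and a :: "'i \<Rightarrow> real"
  assumes "open V" "z \<in> V"
    and holo: "\<And>l. l \<in> I \<Longrightarrow> T l holomorphic_on V"
    and pos: "\<And>w. w \<in> V \<Longrightarrow> (\<Sum>l\<in>I. a l * (cmod (T l w))\<^sup>2) > 0"
  shows "ddbar (\<lambda>w. ln (\<Sum>l\<in>I. a l * (cmod (T l w))\<^sup>2)) z =
    (\<Sum>l\<in>I. a l * (cmod (deriv (T l) z))\<^sup>2) / (\<Sum>l\<in>I. a l * (cmod (T l z))\<^sup>2)
    - (cmod (\<Sum>l\<in>I. a l * (cnj (T l z) * deriv (T l) z)))\<^sup>2 / (\<Sum>l\<in>I. a l * (cmod (T l z))\<^sup>2)\<^sup>2"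
proof (rule ddbar_ln[OF assms(1,2) pos])
  have T': "(T l has_field_derivative deriv (T l) w) (at w)" if "l \<in> I" "w \<in> V" for l w
    using holomorphic_derivI[OF holo \<open>open V\<close>] that .
  have T'': "(deriv (T l) has_field_derivative deriv (deriv (T l)) w) (at w)" if "l \<in> I" "w \<in> V" for l w
    using holomorphic_derivI[OF holomorphic_deriv[OF holo \<open>open V\<close>] \<open>open V\<close>] that .
  show "((\<lambda>w. \<Sum>l\<in>I. a l * (cmod (T l w))\<^sup>2) has_derivative
      (\<lambda>h. 2 * Re ((\<Sum>l\<in>I. a l * (cnj (T l w) * deriv (T l) w)) * h))) (at w)" if "w \<in> V" for w
  proof -
    have "((\<lambda>w. \<Sum>l\<in>I. a l * (cmod (T l w))\<^sup>2) has_derivative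
        (\<lambda>h. \<Sum>l\<in>I. a l * (2 * Re (cnj (T l w) * deriv (T l) w * h)))) (at w)"
      using T' \<open>w \<in> V\<close> by (intro has_derivative_sum has_derivative_mult_right has_derivative_cmod_sq)
    moreover have "(\<Sum>l\<in>I. a l * (2 * Re (cnj (T l w) * deriv (T l) w * h)))
        = 2 * Re ((\<Sum>l\<in>I. a l * (cnj (T l w) * deriv (T l) w)) * h)" for h
      by (simp add: sum_distrib_left sum_distrib_right Re_sum algebra_simps)
    ultimately show ?thesis
      by simp
  qed
  have "((\<lambda>w. \<Sum>l\<in>I. a l * (cnj (T l w) * deriv (T l) w)) has_derivative
      (\<lambda>h. \<Sum>l\<in>I. a l * (cnj (deriv (T l) z) * deriv (T l) z * cnj h
                           + cnj (T l z) * deriv (deriv (T l)) z * h))) (at z)"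
    using T' T'' \<open>z \<in> V\<close>
    by (intro has_derivative_sum has_derivative_mult_right has_derivative_cnj_mult)
  moreover have "(\<Sum>l\<in>I. a l * (cnj (deriv (T l) z) * deriv (T l) z * cnj h
                           + cnj (T l z) * deriv (deriv (T l)) z * h))
      = of_real (\<Sum>l\<in>I. a l * (cmod (deriv (T l) z))\<^sup>2) * cnj h
        + (\<Sum>l\<in>I. a l * (cnj (T l z) * deriv (deriv (T l)) z)) * h" for h
    unfolding of_real_sum of_real_mult complex_norm_square
    by (simp add: sum.distrib sum_distrib_left algebra_simps)
  ultimately show "((\<lambda>w. \<Sum>l\<in>I. a l * (cnj (T l w) * deriv (T l) w)) has_derivative
      (\<lambda>h. of_real (\<Sum>l\<in>I. a l * (cmod (deriv (T l) z))\<^sup>2) * cnj h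
           + (\<Sum>l\<in>I. a l * (cnj (T l z) * deriv (deriv (T l)) z)) * h)) (at z)"
    by simp
qed

lemma abs_weighted_sum_quotient_diff_le:
  fixes t d :: "'i \<Rightarrow> complex" and a :: "'i \<Rightarrow> real"
  assumes a: "\<And>l. l \<in> I \<Longrightarrow> a l \<ge> 0"
    and d: "\<And>l. l \<in> I \<Longrightarrow> cmod (d l) \<le> X * cmod (t l)"
    and F_pos: "(\<Sum>l\<in>I. a l * (cmod (t l))\<^sup>2) > 0"
  shows "\<bar>(\<Sum>l\<in>I. a l * (cmod (d l))\<^sup>2) / (\<Sum>l\<in>I. a l * (cmod (t l))\<^sup>2)
          - (cmod (\<Sum>l\<in>I. a l * (cnj (t l) * d l)))\<^sup>2 / (\<Sum>l\<in>I. a l * (cmod (t l))\<^sup>2)\<^sup>2\<bar> \<le> X\<^sup>2"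
proof -
  define F where "F = (\<Sum>l\<in>I. a l * (cmod (t l))\<^sup>2)"
  have "(\<Sum>l\<in>I. a l * (cmod (d l))\<^sup>2) \<le> (\<Sum>l\<in>I. a l * (X * cmod (t l))\<^sup>2)"
    using a d by (intro sum_mono mult_left_mono power_mono) auto
  then have P: "(\<Sum>l\<in>I. a l * (cmod (d l))\<^sup>2) \<le> X\<^sup>2 * F"
    by (simp add: F_def sum_distrib_left power_mult_distrib algebra_simps)
  have "cmod (\<Sum>l\<in>I. a l * (cnj (t l) * d l)) \<le> (\<Sum>l\<in>I. a l * (cmod (t l) * (X * cmod (t l))))"
    using a d by (intro order_trans[OF norm_sum] sum_mono)
      (simp add: norm_mult abs_of_nonneg mult_left_mono)
  then have S: "cmod (\<Sum>l\<in>I. a l * (cnj (t l) * d l)) \<le> X * F"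
    by (simp add: F_def sum_distrib_left power2_eq_square algebra_simps)
  have "(cmod (\<Sum>l\<in>I. a l * (cnj (t l) * d l)))\<^sup>2 \<le> (X * F)\<^sup>2"
    using S by (intro power_mono) auto
  then have "(cmod (\<Sum>l\<in>I. a l * (cnj (t l) * d l)))\<^sup>2 / F\<^sup>2 \<le> X\<^sup>2"
    using F_pos by (simp add: F_def divide_le_eq power_mult_distrib)
  moreover have "(\<Sum>l\<in>I. a l * (cmod (d l))\<^sup>2) / F \<le> X\<^sup>2"
    using P F_pos by (simp add: F_def divide_le_eq)
  moreover have "(\<Sum>l\<in>I. a l * (cmod (d l))\<^sup>2) / F \<ge> 0"
    using a F_pos by (simp add: F_def sum_nonneg)
  moreover have "(cmod (\<Sum>l\<in>I. a l * (cnj (t l) * d l)))\<^sup>2 / F\<^sup>2 \<ge> 0"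
    by simp
  ultimately show ?thesis
    unfolding F_def[symmetric] abs_le_iff by linarith
qed

lemma abs_ddbar_ln_weighted_sum_cmod_sq_le:
  fixes T :: "'i \<Rightarrow> complex \<Rightarrow> complex" and a :: "'i \<Rightarrow> real"
  assumes "open V" "z \<in> V"
    and "\<And>l. l \<in> I \<Longrightarrow> T l holomorphic_on V"
    and "\<And>w. w \<in> V \<Longrightarrow> (\<Sum>l\<in>I. a l * (cmod (T l w))\<^sup>2) > 0"
    and "\<And>l. l \<in> I \<Longrightarrow> a l \<ge> 0"
    and "\<And>l. l \<in> I \<Longrightarrow> cmod (deriv (T l) z) \<le> X * cmod (T l z)"
  shows "\<bar>ddbar (\<lambda>w. ln (\<Sum>l\<in>I. a l * (cmod (T l w))\<^sup>2)) z\<bar> \<le> X\<^sup>2"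
  using assms by (subst ddbar_ln_weighted_sum_cmod_sq[OF assms(1,2)])
    (auto intro!: abs_weighted_sum_quotient_diff_le)

lemma holomorphic_eventually_nonzero:
  assumes "f holomorphic_on S" "open S" "connected S" "\<xi> \<in> S" "\<exists>w\<in>S. f w \<noteq> 0"
  shows "\<forall>\<^sub>F w in at \<xi>. f w \<noteq> 0"
proof -
  obtain r g where "r > 0" and fg: "\<And>w. w \<in> cball \<xi> r \<Longrightarrow> f w = g w * (w - \<xi>) ^ nat (zorder f \<xi>) \<and> g w \<noteq> 0"
    using zorder_exist_zero[OF assms] by blast
  have "\<forall>\<^sub>F w in at \<xi>. w \<in> ball \<xi> r - {\<xi>}"
    using \<open>r > 0\<close> by (intro eventually_at_in_open) auto
  then show ?thesis
    by (rule eventually_mono) (use fg in fastforce)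
qed

text \<open>The constant comes from \<open>(w - \<xi>) * f' w / f w = n + (w - \<xi>) * g' w / g w \<longrightarrow> n\<close>.\<close>

lemma log_deriv_bound_power_factor:
  assumes g: "g holomorphic_on ball \<xi> r" and "r > 0" "g \<xi> \<noteq> 0"
    and f: "\<And>w. w \<in> ball \<xi> r \<Longrightarrow> f w = g w * (w - \<xi>) ^ n"
  shows "\<forall>\<^sub>F w in at \<xi>. cmod (w - \<xi>) * cmod (deriv f w) \<le> (real n + 1) * cmod (f w)"
proof -
  have \<xi>: "\<xi> \<in> ball \<xi> r"
    using \<open>r > 0\<close> by simp
  have f': "(w - \<xi>) * deriv f w = (w - \<xi>) ^ n * ((w - \<xi>) * deriv g w + of_nat n * g w)"
    if w: "w \<in> ball \<xi> r" for w
  proof -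
    have "((\<lambda>w. g w * (w - \<xi>) ^ n) has_field_derivative
        deriv g w * (w - \<xi>) ^ n + g w * (of_nat n * (w - \<xi>) ^ (n - 1))) (at w)"
      using holomorphic_derivI[OF g open_ball w] by (auto intro!: derivative_eq_intros)
    then have "(f has_field_derivative
        deriv g w * (w - \<xi>) ^ n + g w * (of_nat n * (w - \<xi>) ^ (n - 1))) (at w)"
      by (rule has_field_derivative_transform_within_open[OF _ open_ball w]) (use f in auto)
    then have "(w - \<xi>) * deriv f w
        = (w - \<xi>) ^ n * ((w - \<xi>) * deriv g w) + g w * ((w - \<xi>) * (of_nat n * (w - \<xi>) ^ (n - 1)))"
      by (simp add: DERIV_imp_deriv algebra_simps)
    also have "(w - \<xi>) * (of_nat n * (w - \<xi>) ^ (n - 1)) = of_nat n * (w - \<xi>) ^ n"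
      by (cases n) auto
    finally show ?thesis
      by (simp add: algebra_simps)
  qed
  have "isCont g \<xi>" "isCont (deriv g) \<xi>"
    using continuous_on_interior[OF holomorphic_on_imp_continuous_on[OF g]]
      continuous_on_interior[OF holomorphic_on_imp_continuous_on[OF holomorphic_deriv[OF g open_ball]]] \<xi>
    by auto
  then have "((\<lambda>w. cmod ((w - \<xi>) * deriv g w) - cmod (g w)) \<longlongrightarrow> - cmod (g \<xi>)) (at \<xi>)"
    by (auto intro!: tendsto_eq_intros simp: isCont_def)
  then have "\<forall>\<^sub>F w in at \<xi>. cmod ((w - \<xi>) * deriv g w) < cmod (g w)"
    using \<open>g \<xi> \<noteq> 0\<close> by (auto dest: order_tendstoD(2)[where a = 0])
  moreover have "\<forall>\<^sub>F w in at \<xi>. w \<in> ball \<xi> r"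
    using \<xi> by (intro eventually_at_in_open') auto
  ultimately show ?thesis
  proof eventually_elim
    case (elim w)
    have "cmod (w - \<xi>) * cmod (deriv f w) = cmod (w - \<xi>) ^ n * cmod ((w - \<xi>) * deriv g w + of_nat n * g w)"
      using f'[OF elim(2)] by (metis norm_mult norm_power)
    also have "\<dots> \<le> cmod (w - \<xi>) ^ n * ((real n + 1) * cmod (g w))"
      using elim(1) norm_triangle_ineq[of "(w - \<xi>) * deriv g w" "of_nat n * g w"]
      by (intro mult_left_mono) (auto simp: norm_mult algebra_simps)
    also have "\<dots> = (real n + 1) * cmod (f w)"
      using f[OF elim(2)] by (simp add: norm_mult norm_power)
    finally show ?case .
  qed
qed

lemma holomorphic_log_deriv_bound:
  assumes holo: "f holomorphic_on S" and "open S" "connected S" "\<xi> \<in> S"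
  shows "\<exists>K. \<forall>\<^sub>F w in at \<xi>. cmod (w - \<xi>) * cmod (deriv f w) \<le> K * cmod (f w)"
proof (cases "\<exists>w\<in>S. f w \<noteq> 0")
  case True
  then obtain r g where "r > 0" and g: "g holomorphic_on cball \<xi> r"
    and fg: "\<And>w. w \<in> cball \<xi> r \<Longrightarrow> f w = g w * (w - \<xi>) ^ nat (zorder f \<xi>) \<and> g w \<noteq> 0"
    using zorder_exist_zero[OF assms] by blast
  have "g holomorphic_on ball \<xi> r"
    using g by (rule holomorphic_on_subset) auto
  then show ?thesis
    using log_deriv_bound_power_factor[of g \<xi> r f "nat (zorder f \<xi>)"] \<open>r > 0\<close> fg by auto
next
  case False
  have "deriv f w = 0" if "w \<in> S" for w
  proof -
    have "\<forall>\<^sub>F v in nhds w. f v = 0"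
      using False eventually_nhds_in_open[OF \<open>open S\<close> that] by (auto elim: eventually_mono)
    then show ?thesis
      by (simp add: deriv_cong_ev[of f "\<lambda>_. 0"])
  qed
  then have "\<forall>\<^sub>F w in at \<xi>. cmod (w - \<xi>) * cmod (deriv f w) \<le> 0 * cmod (f w)"
    using eventually_at_in_open'[OF \<open>open S\<close> \<open>\<xi> \<in> S\<close>] by (auto elim: eventually_mono)
  then show ?thesis ..
qed

lemma holomorphic_family_log_deriv_bound:
  fixes f :: "'i \<Rightarrow> complex \<Rightarrow> complex"
  assumes "finite I" "\<And>l. l \<in> I \<Longrightarrow> f l holomorphic_on S" "open S" "connected S" "\<xi> \<in> S"
  shows "\<exists>K. \<forall>\<^sub>F w in at \<xi>. \<forall>l\<in>I. cmod (w - \<xi>) * cmod (deriv (f l) w) \<le> K * cmod (f l w)"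
proof -
  obtain K where K: "\<And>l. l \<in> I \<Longrightarrow>
      \<forall>\<^sub>F w in at \<xi>. cmod (w - \<xi>) * cmod (deriv (f l) w) \<le> K l * cmod (f l w)"
    using holomorphic_log_deriv_bound[OF assms(2-5)] by metis
  have "\<forall>\<^sub>F w in at \<xi>. \<forall>l\<in>I. cmod (w - \<xi>) * cmod (deriv (f l) w) \<le> Max (K ` I) * cmod (f l w)"
    unfolding eventually_ball_finite_distrib[OF \<open>finite I\<close>]
  proof
    fix l assume "l \<in> I"
    have "K l \<le> Max (K ` I)"
      using \<open>finite I\<close> \<open>l \<in> I\<close> by simp
    then show "\<forall>\<^sub>F w in at \<xi>. cmod (w - \<xi>) * cmod (deriv (f l) w) \<le> Max (K ` I) * cmod (f l w)"
      using K[OF \<open>l \<in> I\<close>] by (elim eventually_mono) (meson mult_right_mono norm_ge_zero order_trans)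
  qed
  then show ?thesis ..
qed

theorem lemma2:
  fixes T :: "nat \<Rightarrow> complex \<Rightarrow> complex" and q :: "nat \<Rightarrow> real" and M :: nat
    and r :: real
  assumes r_pos: "r > 0"
    and holo: "\<And>l. l \<in> {1..M} \<Longrightarrow> T l holomorphic_on ball 0 r"
    and nonzero: "\<exists>l\<in>{1..M}. \<exists>z\<in>ball 0 r. T l z \<noteq> 0"
  shows "\<exists>U C. open U \<and> 0 \<in> U \<and>
           (\<forall>z\<in>U - {0}. \<forall>\<epsilon>::real. \<epsilon> > 0 \<longrightarrow>
              \<bar>ddbar (\<lambda>w. ln (\<Sum>l=1..M. \<epsilon> powr (2 * q l) * (cmod (T l w))\<^sup>2)) z\<bar>
                \<le> C / (cmod z)\<^sup>2)"
proof -
  have ball: "open (ball (0::complex) r)" "connected (ball (0::complex) r)" "(0::complex) \<in> ball 0 r"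
    using r_pos by auto
  obtain K where K: "\<forall>\<^sub>F w in at 0. \<forall>l\<in>{1..M}. cmod w * cmod (deriv (T l) w) \<le> K * cmod (T l w)"
    using holomorphic_family_log_deriv_bound[of "{1..M}" T, OF _ holo ball] by auto
  obtain l0 where l0: "l0 \<in> {1..M}" "\<exists>z\<in>ball 0 r. T l0 z \<noteq> 0"
    using nonzero by blast
  have "\<forall>\<^sub>F w in at 0. w \<in> ball 0 r \<and> T l0 w \<noteq> 0 \<and>
      (\<forall>l\<in>{1..M}. cmod w * cmod (deriv (T l) w) \<le> K * cmod (T l w))"
    using eventually_at_in_open'[OF ball(1,3)] holomorphic_eventually_nonzero[OF holo[OF l0(1)] ball l0(2)] K
    by eventually_elim auto
  then obtain d where "d > 0" and near: "\<And>w. w \<in> ball 0 d - {0} \<Longrightarrow> w \<in> ball 0 r \<and> T l0 w \<noteq> 0 \<and>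
      (\<forall>l\<in>{1..M}. cmod w * cmod (deriv (T l) w) \<le> K * cmod (T l w))"
    unfolding eventually_at by (auto simp: dist_commute)
  show ?thesis
  proof (intro exI[of _ "ball 0 d"] exI[of _ "K\<^sup>2"] conjI ballI allI impI)
    fix z :: complex and \<epsilon> :: real
    assume z: "z \<in> ball 0 d - {0}" and "\<epsilon> > 0"
    have "ball 0 d - {0} \<subseteq> ball (0::complex) r"
      using near by blast
    then have V: "open (ball 0 d - {0::complex})" "\<And>l. l \<in> {1..M} \<Longrightarrow> T l holomorphic_on ball 0 d - {0}"
      using holomorphic_on_subset[OF holo] by auto
    have "\<bar>ddbar (\<lambda>w. ln (\<Sum>l=1..M. \<epsilon> powr (2 * q l) * (cmod (T l w))\<^sup>2)) z\<bar> \<le> (K / cmod z)\<^sup>2"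
    proof (rule abs_ddbar_ln_weighted_sum_cmod_sq_le[OF V(1) z V(2)])
      show "(\<Sum>l=1..M. \<epsilon> powr (2 * q l) * (cmod (T l w))\<^sup>2) > 0" if "w \<in> ball 0 d - {0}" for w
        using near[OF that] l0(1) \<open>\<epsilon> > 0\<close> by (intro sum_pos2[of _ l0]) auto
      show "cmod (deriv (T l) z) \<le> K / cmod z * cmod (T l z)" if "l \<in> {1..M}" for l
        using near[OF z] that z by (auto simp: field_simps)
    qed auto
    then show "\<bar>ddbar (\<lambda>w. ln (\<Sum>l=1..M. \<epsilon> powr (2 * q l) * (cmod (T l w))\<^sup>2)) z\<bar> \<le> K\<^sup>2 / (cmod z)\<^sup>2"
      by (simp add: power_divide)
  qed (use \<open>d > 0\<close> in auto)
qed

end
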